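(* Haechi (described in the context) guarantees sharded system liveness: every transaction received by at least one honest node is eventually handled by the relevant shards and gets a response from the sharded system.
   Context: Setting. A sharded blockchain consists of shards $S_0,S_1,\dots,S_m$ ($S_0$ the beacon shard), each running a BFT state-machine-replication consensus and always satisfying $3f_i+1<|S_i|$ ($f_i$ Byzantine nodes out of $|S_i|$), hence each shard has intra-shard safety and intra-shard liveness (a transaction received by at least one honest node of the shard is eventually handled and answered by the shard); messages between honest parties are not dropped. OTXs are transactions calling order-sensitive contracts. Non-OTX transactions are handled by the underlying intra-shard consensus (intra-shard transactions) or by a two-phase cross-shard protocol (cross-shard transactions), which are assumed to provide responses. Haechi for OTXs: the sender shard processes an OTX in a block and forwards it in a certified CrossLink (block timestamp, OTX list, shard id, block height) to the beacon chain; the beacon chain, once it has received a consecutive-height CrossLink from every shard, selects all CrossLinks with timestamp at most the minimum over shards of the last received timestamp and orders their OTXs by block timestamp then in-block index (agreed by BFT consensus); contract shards execute called contracts in this order and return commit/abort results; the sender shard coordinates the final commit or abort and notifies related shards. *)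

theory Defs
  imports Main
begin

text \<open>Abstract trace model of a sharded blockchain running Haechi.
  Shards are numbered 0..m (shard 0 is the beacon shard); time is discrete (nat).\<close>

datatype txkind = IntraTx | CrossTx | OTX

datatype 'tx msg =
    TxMsg 'tx
  | CrossLinkMsg nat nat      \<comment> \<open>certified CrossLink of shard i, block height h\<close>
  | OrderedMsg 'tx            \<comment> \<open>OTX ordered by the beacon chain, delivered to a contract shard\<close>
  | ResultMsg 'tx nat         \<comment> \<open>commit/abort execution result of contract shard j for an OTX\<close>
  | DecisionMsg 'tx           \<comment> \<open>final commit/abort decision, coordinated by the sender shard\<close>

record ('n, 'tx) exec =
  shard_of :: "'n \<Rightarrow> nat"
  byz      :: "'n set"
  recv     :: "'n \<Rightarrow> 'tx msg \<Rightarrow> nat \<Rightarrow> bool"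
  hnd      :: "nat \<Rightarrow> 'tx msg \<Rightarrow> nat \<Rightarrow> bool"  \<comment> \<open>shard i handled (committed) input at time t\<close>
  sendm    :: "nat \<Rightarrow> nat \<Rightarrow> 'tx msg \<Rightarrow> nat \<Rightarrow> bool" \<comment> \<open>shard i sends message to shard j at t\<close>
  kind     :: "'tx \<Rightarrow> txkind"
  home     :: "'tx \<Rightarrow> nat"                    \<comment> \<open>sender shard of a transaction\<close>
  others   :: "'tx \<Rightarrow> nat set"                \<comment> \<open>other involved shards (cross-shard participants / contract shards)\<close>
  btxs     :: "nat \<Rightarrow> nat \<Rightarrow> 'tx list"          \<comment> \<open>transactions (OTX list) of block h of shard i\<close>
  bts      :: "nat \<Rightarrow> nat \<Rightarrow> nat"              \<comment> \<open>timestamp of block h of shard i\<close>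
  ctime    :: "nat \<Rightarrow> nat \<Rightarrow> nat"              \<comment> \<open>time at which block h of shard i is committed\<close>
  resp     :: "'tx \<Rightarrow> nat \<Rightarrow> bool"

definition shard_nodes :: "('n,'tx) exec \<Rightarrow> nat \<Rightarrow> 'n set" where
  "shard_nodes E i = {n. shard_of E n = i}"

definition nbyz :: "('n,'tx) exec \<Rightarrow> nat \<Rightarrow> nat" where
  "nbyz E i = card (byz E \<inter> shard_nodes E i)"

definition honest :: "('n,'tx) exec \<Rightarrow> 'n \<Rightarrow> bool" where
  "honest E n \<longleftrightarrow> n \<notin> byz E"

definition honest_recv :: "('n,'tx) exec \<Rightarrow> nat \<Rightarrow> 'tx msg \<Rightarrow> nat \<Rightarrow> bool" where
  "honest_recv E i x t \<longleftrightarrow> (\<exists>n. honest E n \<and> shard_of E n = i \<and> recv E n x t)"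

definition relevant :: "('n,'tx) exec \<Rightarrow> 'tx \<Rightarrow> nat set" where
  "relevant E tx = insert (home E tx) (others E tx)"

definition handled_by :: "('n,'tx) exec \<Rightarrow> nat \<Rightarrow> 'tx \<Rightarrow> nat \<Rightarrow> bool" where
  "handled_by E i tx t \<longleftrightarrow>
     (if kind E tx = OTX then hnd E i (DecisionMsg tx) t else hnd E i (TxMsg tx) t)"

definition bft_bound :: "nat \<Rightarrow> ('n,'tx) exec \<Rightarrow> bool" where
  "bft_bound m E \<longleftrightarrow> (\<forall>i\<le>m. finite (shard_nodes E i) \<and> 3 * nbyz E i + 1 < card (shard_nodes E i))"

definition intra_shard_liveness :: "nat \<Rightarrow> ('n,'tx) exec \<Rightarrow> bool" where
  "intra_shard_liveness m E \<longleftrightarrow>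
     (\<forall>i\<le>m. \<forall>x t. honest_recv E i x t \<longrightarrow> (\<exists>t'\<ge>t. hnd E i x t'))"

definition reliable_delivery :: "nat \<Rightarrow> ('n,'tx) exec \<Rightarrow> bool" where
  "reliable_delivery m E \<longleftrightarrow>
     (\<forall>i\<le>m. \<forall>j\<le>m. \<forall>x t. sendm E i j x t \<longrightarrow> (\<exists>t'\<ge>t. honest_recv E j x t'))"

definition well_formed_txs :: "nat \<Rightarrow> ('n,'tx) exec \<Rightarrow> bool" where
  "well_formed_txs m E \<longleftrightarrow>
     (\<forall>tx. home E tx \<le> m \<and> finite (others E tx) \<and> (\<forall>j\<in>others E tx. j \<le> m)
           \<and> (kind E tx = IntraTx \<longrightarrow> others E tx = {}))"

text \<open>Non-OTX transactions: intra-shard transactions are answered by the shard's consensus;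
  the two-phase cross-shard protocol is assumed to provide responses.\<close>
definition non_otx_protocols :: "('n,'tx) exec \<Rightarrow> bool" where
  "non_otx_protocols E \<longleftrightarrow>
     (\<forall>tx t. kind E tx = IntraTx \<longrightarrow> hnd E (home E tx) (TxMsg tx) t \<longrightarrow> resp E tx t)
   \<and> (\<forall>tx t. kind E tx = CrossTx \<longrightarrow> hnd E (home E tx) (TxMsg tx) t \<longrightarrow>
        (\<exists>t'\<ge>t. resp E tx t' \<and> (\<forall>j\<in>others E tx. \<exists>t''\<ge>t. hnd E j (TxMsg tx) t'')))"

definition block_production :: "nat \<Rightarrow> ('n,'tx) exec \<Rightarrow> bool" where
  "block_production m E \<longleftrightarrow>
     (\<forall>i\<le>m. strict_mono (bts E i) \<and> (\<forall>h. sendm E i 0 (CrossLinkMsg i h) (ctime E i h)))"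

definition haechi_otx :: "nat \<Rightarrow> ('n,'tx) exec \<Rightarrow> bool" where
  "haechi_otx m E \<longleftrightarrow>
     \<comment> \<open>the sender shard processes an OTX in one of its blocks\<close>
     (\<forall>tx t. kind E tx = OTX \<longrightarrow> hnd E (home E tx) (TxMsg tx) t \<longrightarrow>
        (\<exists>h. tx \<in> set (btxs E (home E tx) h)))
   \<comment> \<open>beacon ordering: once the beacon has received, for every shard j, the consecutive CrossLinks
       of heights 0..hs j, every OTX in a received CrossLink whose timestamp is at most the minimum
       of the last received timestamps is ordered and sent to its contract shards\<close>
   \<and> (\<forall>hs t i h tx.
        (\<forall>j\<le>m. \<forall>h'\<le>hs j. \<exists>t'\<le>t. hnd E 0 (CrossLinkMsg j h') t') \<longrightarrow>
        i \<le> m \<longrightarrow> h \<le> hs i \<longrightarrow> (\<forall>j\<le>m. bts E i h \<le> bts E j (hs j)) \<longrightarrow>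
        tx \<in> set (btxs E i h) \<longrightarrow> kind E tx = OTX \<longrightarrow>
        (\<exists>t'\<ge>t. \<forall>j\<in>others E tx. sendm E 0 j (OrderedMsg tx) t'))
   \<comment> \<open>contract shards execute the called contracts and return commit/abort results\<close>
   \<and> (\<forall>tx j t. kind E tx = OTX \<longrightarrow> j \<in> others E tx \<longrightarrow> hnd E j (OrderedMsg tx) t \<longrightarrow>
        (\<exists>t'\<ge>t. sendm E j (home E tx) (ResultMsg tx j) t'))
   \<comment> \<open>the sender shard coordinates the final commit/abort and notifies the related shards\<close>
   \<and> (\<forall>tx t. kind E tx = OTX \<longrightarrow>
        (\<forall>j\<in>others E tx. \<exists>t'\<le>t. hnd E (home E tx) (ResultMsg tx j) t') \<longrightarrow>
        (\<exists>t'\<ge>t. \<forall>j\<in>relevant E tx. sendm E (home E tx) j (DecisionMsg tx) t'))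
   \<comment> \<open>the final decision of the sender shard is the response to the OTX\<close>
   \<and> (\<forall>tx t. kind E tx = OTX \<longrightarrow> hnd E (home E tx) (DecisionMsg tx) t \<longrightarrow> resp E tx t)"

definition haechi_system :: "nat \<Rightarrow> ('n,'tx) exec \<Rightarrow> bool" where
  "haechi_system m E \<longleftrightarrow> bft_bound m E \<and> intra_shard_liveness m E \<and> reliable_delivery m E
     \<and> well_formed_txs m E \<and> non_otx_protocols E \<and> block_production m E \<and> haechi_otx m E"

end

theory Submission
  imports Defs
begin

text \<open>Every step of the protocol is a message sent between shards, and a sent message is
  received by an honest node and hence handled by the receiving shard; so liveness reduces to
  showing that each step is eventually enabled. Only the beacon ordering needs an argument:
  it waits until every shard's latest CrossLink timestamp reaches the timestamp of the block
  containing the OTX. Since block timestamps are strictly increasing natural numbers, the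
  CrossLink of height H of any shard has timestamp at least H, so once the beacon
  holds the CrossLinks up to a height exceeding that timestamp the block is ordered. Steps that
  wait for messages from finitely many shards wait for the latest of them.\<close>

definition answered_after :: "('n, 'tx) exec \<Rightarrow> 'tx \<Rightarrow> nat \<Rightarrow> bool" where
  "answered_after E tx t \<longleftrightarrow>
     (\<forall>i\<in>relevant E tx. \<exists>t'\<ge>t. handled_by E i tx t') \<and> (\<exists>t'\<ge>t. resp E tx t')"

lemma answered_after_mono:
  assumes "t \<le> t'" "answered_after E tx t'"
  shows "answered_after E tx t"
  using assms unfolding answered_after_def by (meson order_trans)

lemma finite_common_witness_bound:
  fixes t0 :: "'b::linorder"
  assumes "finite S" "\<forall>x\<in>S. \<exists>t. P x t"
  shows "\<exists>T\<ge>t0. \<forall>x\<in>S. \<exists>t\<le>T. P x t"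
proof -
  obtain f where f: "\<forall>x\<in>S. P x (f x)" using assms(2) by metis
  define T where "T = Max (insert t0 (f ` S))"
  have "t0 \<le> T" "\<forall>x\<in>S. f x \<le> T" unfolding T_def using assms(1) by auto
  then show ?thesis using f by blast
qed

lemma well_formed_relevant_le:
  assumes "well_formed_txs m E" "i \<in> relevant E tx"
  shows "i \<le> m"
  using assms unfolding well_formed_txs_def relevant_def by auto

lemma well_formed_home_le: "well_formed_txs m E \<Longrightarrow> home E tx \<le> m"
  unfolding well_formed_txs_def by simp

lemma sent_eventually_handled:
  assumes "reliable_delivery m E" "intra_shard_liveness m E"
    and "i \<le> m" "j \<le> m" "sendm E i j x t"
  shows "\<exists>t'\<ge>t. hnd E j x t'"
proof -
  obtain t1 where "t1 \<ge> t" "honest_recv E j x t1"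
    using assms(1,3-5) unfolding reliable_delivery_def by blast
  moreover obtain t2 where "t2 \<ge> t1" "hnd E j x t2"
    using assms(2,4) \<open>honest_recv E j x t1\<close> unfolding intra_shard_liveness_def by blast
  ultimately show ?thesis by (blast intro: le_trans)
qed

lemma intra_tx_answered:
  assumes "well_formed_txs m E" "non_otx_protocols E"
    and "kind E tx = IntraTx" "hnd E (home E tx) (TxMsg tx) t"
  shows "answered_after E tx t"
proof -
  have "relevant E tx = {home E tx}"
    using assms(1,3) unfolding well_formed_txs_def relevant_def by simp
  moreover have "resp E tx t"
    using assms(2-4) unfolding non_otx_protocols_def by simp
  ultimately show ?thesis
    using assms(3,4) unfolding answered_after_def handled_by_def by auto
qed

lemma cross_tx_answered:
  assumes "non_otx_protocols E" "kind E tx = CrossTx" "hnd E (home E tx) (TxMsg tx) t"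
  shows "answered_after E tx t"
proof -
  obtain t' where "t' \<ge> t" "resp E tx t'"
    and others_handle: "\<forall>j\<in>others E tx. \<exists>t''\<ge>t. hnd E j (TxMsg tx) t''"
    using assms unfolding non_otx_protocols_def by blast
  moreover have "\<forall>i\<in>relevant E tx. \<exists>t''\<ge>t. hnd E i (TxMsg tx) t''"
    using assms(3) others_handle unfolding relevant_def by auto
  ultimately show ?thesis
    using assms(2) unfolding answered_after_def handled_by_def by auto
qed

lemma crosslinks_eventually_handled:
  assumes "reliable_delivery m E" "intra_shard_liveness m E" "block_production m E"
  shows "\<exists>T\<ge>t. \<forall>j\<le>m. \<forall>h\<le>H. \<exists>t'\<le>T. hnd E 0 (CrossLinkMsg j h) t'"
proof -
  have "\<exists>t'. hnd E 0 (CrossLinkMsg j h) t'" if "j \<le> m" for j h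
  proof -
    have "sendm E j 0 (CrossLinkMsg j h) (ctime E j h)"
      using assms(3) that unfolding block_production_def by simp
    then show ?thesis using sent_eventually_handled[OF assms(1,2) that le0] by blast
  qed
  then have "\<forall>p\<in>{..m} \<times> {..H}. \<exists>t'. hnd E 0 (CrossLinkMsg (fst p) (snd p)) t'"
    by auto
  from finite_common_witness_bound[OF _ this, of t]
  obtain T where "T \<ge> t" "\<forall>p\<in>{..m} \<times> {..H}. \<exists>t'\<le>T. hnd E 0 (CrossLinkMsg (fst p) (snd p)) t'"
    by auto
  then show ?thesis by auto
qed

lemmas haechi_otx_in_block =
    haechi_otx_def[THEN iffD1, THEN conjunct1, rule_format]
  and haechi_otx_orders =
    haechi_otx_def[THEN iffD1, THEN conjunct2, THEN conjunct1, rule_format (no_asm)]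
  and haechi_otx_executes =
    haechi_otx_def[THEN iffD1, THEN conjunct2, THEN conjunct2, THEN conjunct1, rule_format]
  and haechi_otx_decides =
    haechi_otx_def[THEN iffD1, THEN conjunct2, THEN conjunct2, THEN conjunct2, THEN conjunct1, rule_format (no_asm)]
  and haechi_otx_responds =
    haechi_otx_def[THEN iffD1, THEN conjunct2, THEN conjunct2, THEN conjunct2, THEN conjunct2, rule_format]

lemma otx_eventually_ordered:
  assumes "reliable_delivery m E" "intra_shard_liveness m E" "well_formed_txs m E"
    and "block_production m E" "haechi_otx m E"
    and "kind E tx = OTX" "hnd E (home E tx) (TxMsg tx) t"
  shows "\<exists>t'\<ge>t. \<forall>j\<in>others E tx. sendm E 0 j (OrderedMsg tx) t'"
proof -
  define i where "i = home E tx"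
  have "i \<le> m" unfolding i_def by (rule well_formed_home_le[OF assms(3)])
  obtain h where "tx \<in> set (btxs E i h)"
    using haechi_otx_in_block[OF assms(5-7)] unfolding i_def by blast
  define H where "H = max h (bts E i h)"
  have stamps: "\<forall>j\<le>m. bts E i h \<le> bts E j H"
  proof (intro allI impI)
    fix j assume "j \<le> m"
    then have "strict_mono (bts E j)" using assms(4) unfolding block_production_def by simp
    then have "H \<le> bts E j H" by (simp add: strict_mono_imp_increasing)
    then show "bts E i h \<le> bts E j H" unfolding H_def by simp
  qed
  obtain T where "T \<ge> t" and linked: "\<forall>j\<le>m. \<forall>h'\<le>H. \<exists>t'\<le>T. hnd E 0 (CrossLinkMsg j h') t'"
    using crosslinks_eventually_handled[OF assms(1,2,4)] by blast
  have "h \<le> H" unfolding H_def by simp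
  obtain t' where "t' \<ge> T" "\<forall>j\<in>others E tx. sendm E 0 j (OrderedMsg tx) t'"
    using haechi_otx_orders[OF assms(5) linked \<open>i \<le> m\<close> \<open>h \<le> H\<close> stamps
        \<open>tx \<in> set (btxs E i h)\<close> assms(6)]
    by auto
  then show ?thesis using \<open>T \<ge> t\<close> by (blast intro: le_trans)
qed

lemma otx_results_eventually_handled:
  assumes "reliable_delivery m E" "intra_shard_liveness m E" "well_formed_txs m E"
    and "haechi_otx m E" "kind E tx = OTX"
    and "\<forall>j\<in>others E tx. sendm E 0 j (OrderedMsg tx) t"
  shows "\<exists>T\<ge>t. \<forall>j\<in>others E tx. \<exists>t'\<le>T. hnd E (home E tx) (ResultMsg tx j) t'"
proof -
  have home_le: "home E tx \<le> m" using well_formed_home_le[OF assms(3)] .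
  have others_le: "\<forall>j\<in>others E tx. j \<le> m" and "finite (others E tx)"
    using assms(3) unfolding well_formed_txs_def by simp_all
  have results: "\<forall>j\<in>others E tx. \<exists>t'. hnd E (home E tx) (ResultMsg tx j) t'"
  proof
    fix j assume j: "j \<in> others E tx"
    then have "j \<le> m" using others_le by simp
    obtain t1 where "hnd E j (OrderedMsg tx) t1"
      using sent_eventually_handled[OF assms(1,2) le0 \<open>j \<le> m\<close>] assms(6) j by blast
    then obtain t2 where "sendm E j (home E tx) (ResultMsg tx j) t2"
      using haechi_otx_executes[OF assms(4,5) j] by auto
    then show "\<exists>t'. hnd E (home E tx) (ResultMsg tx j) t'"
      using sent_eventually_handled[OF assms(1,2) \<open>j \<le> m\<close> home_le] by blast
  qed
  show ?thesis by (rule finite_common_witness_bound[OF \<open>finite (others E tx)\<close> results])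
qed

lemma otx_answered_after_results:
  assumes "reliable_delivery m E" "intra_shard_liveness m E" "well_formed_txs m E"
    and "haechi_otx m E" "kind E tx = OTX"
    and "\<forall>j\<in>others E tx. \<exists>t'\<le>t. hnd E (home E tx) (ResultMsg tx j) t'"
  shows "answered_after E tx t"
proof -
  obtain t1 where "t1 \<ge> t" and decided: "\<forall>j\<in>relevant E tx. sendm E (home E tx) j (DecisionMsg tx) t1"
    using haechi_otx_decides[OF assms(4-6)] by auto
  have home_le: "home E tx \<le> m" using well_formed_home_le[OF assms(3)] .
  have handled: "\<forall>i\<in>relevant E tx. \<exists>t'\<ge>t. hnd E i (DecisionMsg tx) t'"
  proof
    fix i assume "i \<in> relevant E tx"
    then obtain t' where "t' \<ge> t1" "hnd E i (DecisionMsg tx) t'"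
      using sent_eventually_handled[OF assms(1,2) home_le well_formed_relevant_le[OF assms(3)]]
        decided by blast
    then show "\<exists>t'\<ge>t. hnd E i (DecisionMsg tx) t'" using \<open>t1 \<ge> t\<close> by (blast intro: le_trans)
  qed
  moreover have "\<exists>t'\<ge>t. resp E tx t'"
    using handled haechi_otx_responds[OF assms(4,5)] unfolding relevant_def by auto
  ultimately show ?thesis
    using assms(5) unfolding answered_after_def handled_by_def by simp
qed

lemma otx_answered:
  assumes "reliable_delivery m E" "intra_shard_liveness m E" "well_formed_txs m E"
    and "block_production m E" "haechi_otx m E"
    and "kind E tx = OTX" "hnd E (home E tx) (TxMsg tx) t"
  shows "answered_after E tx t"
proof -
  obtain t1 where "t1 \<ge> t" "\<forall>j\<in>others E tx. sendm E 0 j (OrderedMsg tx) t1"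
    using otx_eventually_ordered[OF assms] by blast
  then obtain t2 where "t2 \<ge> t1" "\<forall>j\<in>others E tx. \<exists>t'\<le>t2. hnd E (home E tx) (ResultMsg tx j) t'"
    using otx_results_eventually_handled[OF assms(1-3,5,6)] by blast
  then have "answered_after E tx t2"
    using otx_answered_after_results[OF assms(1-3,5,6)] by blast
  moreover have "t \<le> t2" using \<open>t1 \<ge> t\<close> \<open>t2 \<ge> t1\<close> by simp
  ultimately show ?thesis by (rule answered_after_mono[rotated])
qed

theorem theorem3:
  fixes m :: nat and E :: "('n, 'tx) exec" and n :: 'n and tx :: 'tx and t :: nat
  assumes "haechi_system m E"
    and "honest E n" and "shard_of E n = home E tx" and "recv E n (TxMsg tx) t"
  shows "(\<forall>i\<in>relevant E tx. \<exists>t'\<ge>t. handled_by E i tx t') \<and> (\<exists>t'\<ge>t. resp E tx t')"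
proof -
  have rd: "reliable_delivery m E" and lv: "intra_shard_liveness m E"
    and wf: "well_formed_txs m E" and non_otx: "non_otx_protocols E"
    and bp: "block_production m E" and otx: "haechi_otx m E"
    using assms(1) unfolding haechi_system_def by simp_all
  have "honest_recv E (home E tx) (TxMsg tx) t"
    using assms(2-4) unfolding honest_recv_def by blast
  moreover have "home E tx \<le> m" using well_formed_home_le[OF wf] .
  ultimately obtain t1 where "t1 \<ge> t" and home_handles: "hnd E (home E tx) (TxMsg tx) t1"
    using lv unfolding intra_shard_liveness_def by blast
  have "answered_after E tx t1"
  proof (cases "kind E tx")
    case IntraTx
    then show ?thesis using intra_tx_answered[OF wf non_otx _ home_handles] by simp
  next
    case CrossTx
    then show ?thesis using cross_tx_answered[OF non_otx _ home_handles] by simp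
  next
    case OTX
    then show ?thesis using otx_answered[OF rd lv wf bp otx _ home_handles] by simp
  qed
  then have "answered_after E tx t" by (rule answered_after_mono[OF \<open>t1 \<ge> t\<close>])
  then show ?thesis unfolding answered_after_def .
qed

end
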